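(* Let $f=f(u)$ be smooth with $f'(u)\le0$ for all $u\in\mathbb{R}$, let $u^*$ be the unique root of $f(u)=u$, let $(\rho_0,u_0)\in C^1_b(\mathbb{R})\times C^2_b(\mathbb{R})$ with $\rho_0\ge0$ and $e_0=u_0'+\rho_0\ge0$ on $\mathbb{R}$, and set $M=\max\{\sup\rho_0,\sup e_0\}$. Let $(\rho,u)$ be a classical solution of $(S_f)$ on $[0,T)$, sufficiently smooth that $\rho_x$ and $e_x$ are $C^1$. Then for all $t\in[0,T)$, $$\|\rho_x(t,\cdot)\|_\infty\le\big(1+\|\rho_0'\|_\infty+\|e_0'\|_\infty\big)\,e^{12(\|f\|_{C^2}+1)\max\{M^3,1\}\,t},$$ where $\|f\|_{C^2}=\sup_{v\in I}(|f(v)|+|f'(v)|+|f''(v)|)$ with $I=[\min\{\inf u_0,u^*\},\max\{\sup u_0,u^*\}]$.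
   Context: When $f$ depends on $u$ only, system $(S_f)$ is: $\rho_t+(\rho f(u))_x=0$, $u_t+uu_x=\rho\,(f(u)-u)$ for $x\in\mathbb{R}$, $t>0$, with $\rho(0,x)=\rho_0(x)\ge0$, $u(0,x)=u_0(x)$. A classical solution on $[0,T)$ is a pair $\rho,u\in C^1([0,T)\times\mathbb{R})$ satisfying the equations pointwise and the initial data, such that $\rho,u,\rho_x,u_x$ are bounded on $[0,t]\times\mathbb{R}$ for every $t<T$. We write $e:=u_x+\rho$ and $e_0:=u_0'+\rho_0$. $C^k_b(\mathbb{R})$ denotes bounded $C^k$ functions with bounded derivatives up to order $k$; $\|g\|_\infty=\sup_x|g(x)|$. *)

theory Defs
  imports "HOL-Analysis.Analysis"
begin

definition smooth_real :: "(real \<Rightarrow> real) \<Rightarrow> bool" where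
  "smooth_real f \<longleftrightarrow> (\<forall>n x. ((deriv ^^ n) f) differentiable (at x))"

text \<open>C1 on [0,T) x R, described by its partial derivatives gt (in t, one-sided at t = 0)
  and gx (in x), all continuous on [0,T) x R.\<close>
definition C1_strip :: "real \<Rightarrow> (real \<Rightarrow> real \<Rightarrow> real) \<Rightarrow> (real \<Rightarrow> real \<Rightarrow> real)
    \<Rightarrow> (real \<Rightarrow> real \<Rightarrow> real) \<Rightarrow> bool" where
  "C1_strip T g gt gx \<longleftrightarrow>
     (\<forall>t\<in>{0..<T}. \<forall>x. ((\<lambda>s. g s x) has_real_derivative gt t x) (at t within {0..<T})
                     \<and> ((\<lambda>y. g t y) has_real_derivative gx t x) (at x)) \<and>
     continuous_on ({0..<T} \<times> UNIV) (\<lambda>p. g (fst p) (snd p)) \<and>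
     continuous_on ({0..<T} \<times> UNIV) (\<lambda>p. gt (fst p) (snd p)) \<and>
     continuous_on ({0..<T} \<times> UNIV) (\<lambda>p. gx (fst p) (snd p))"

definition bdd_strip :: "real \<Rightarrow> (real \<Rightarrow> real \<Rightarrow> real) \<Rightarrow> bool" where
  "bdd_strip T g \<longleftrightarrow> (\<forall>t\<in>{0..<T}. bounded ((\<lambda>p. g (fst p) (snd p)) ` ({0..t} \<times> UNIV)))"

definition supnorm :: "(real \<Rightarrow> real) \<Rightarrow> real" where
  "supnorm g = Sup (range (\<lambda>x. \<bar>g x\<bar>))"

end

theory Submission
  imports Defs
begin

(* Every bound comes from one comparison argument on the backward cone of dependence of a point,
   whose slope dominates the characteristic speeds f(u) (for rho and rho_x) and u (for e and e_x):
   a C^1 quantity that is negative at time 0 can become zero only at a first time, and there its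
   derivative along a characteristic is forced to be negative, which is absurd.

   This gives successively rho >= 0 and e >= 0 (transport with a linear source), u between
   min(inf u0, ustar) and max(sup u0, ustar) (the source rho (f(u) - u) has the sign of
   ustar - u since f decreases), rho <= M and e <= M (jointly, as u_x = e - rho), and finally
   |rho_x|, |e_x| < Phi = Q exp(E t) with Q = 1 + |rho0'| + |e0'|.  For the last step,
   differentiating the equations shows that where |rho_x| = Phi >= 1 and |e_x| <= Phi (or vice
   versa), the derivative of rho_x^2 (resp. e_x^2) along its characteristic is at most
   10 G Phi^2 with G = (|f|_C2 + 1) max(M^3, 1), less than the growth 24 G Phi^2 of Phi^2 when
   E = 12 G. *)

section \<open>Mean values and mixed partial derivatives\<close>

lemma mvt_closed_segment:
  fixes g g' :: "real \<Rightarrow> real"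
  assumes der: "\<And>z. z \<in> closed_segment p q \<Longrightarrow> (g has_real_derivative g' z) (at z within S)"
    and sub: "closed_segment p q \<subseteq> S"
  shows "\<exists>z\<in>closed_segment p q. g q - g p = g' z * (q - p)"
proof -
  have mvt: "\<exists>z\<in>{a..b}. g b - g a = g' z * (b - a)"
    if ab: "a \<le> b" "closed_segment p q = {a..b}" for a b
  proof (rule mvt_very_simple[OF ab(1), where f'="\<lambda>z h. g' z * h"])
    fix z assume "a \<le> z" "z \<le> b"
    then have "(g has_real_derivative g' z) (at z within {a..b})"
      using der sub ab(2) by (metis atLeastAtMost_iff has_field_derivative_subset)
    then show "(g has_derivative (\<lambda>h. g' z * h)) (at z within {a..b})"
      by (simp add: has_field_derivative_def)
  qed
  show ?thesis
  proof (cases "p \<le> q")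
    case True
    then show ?thesis using mvt[of p q] by (simp add: closed_segment_eq_real_ivl)
  next
    case False
    then obtain z where "z \<in> {q..p}" "g p - g q = g' z * (p - q)"
      using mvt[of q p] by (auto simp: closed_segment_eq_real_ivl)
    then show ?thesis
      using False by (intro bexI[of _ z]) (auto simp: closed_segment_eq_real_ivl algebra_simps)
  qed
qed

lemma dist_Pair_less_halves:
  fixes a a0 b b0 d :: real
  assumes "\<bar>a - a0\<bar> < d/2" "\<bar>b - b0\<bar> < d/2"
  shows "dist (a, b) (a0, b0) < d"
  using sqrt_sum_squares_le_sum_abs[of "a - a0" "b - b0"] assms
  by (simp add: dist_Pair_Pair dist_real_def)

lemma abs_mult_le: "\<bar>x\<bar> \<le> X \<Longrightarrow> \<bar>y\<bar> \<le> Y \<Longrightarrow> \<bar>x * y\<bar> \<le> X * (Y :: real)"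
  unfolding abs_mult by (rule mult_mono) auto

lemma mixed_difference_mvt:
  fixes g gb h :: "real \<Rightarrow> real \<Rightarrow> real"
  assumes A: "convex A" "a0 \<in> A" "a \<in> A" and B: "convex B" "b0 \<in> B" "b \<in> B"
    and gb: "\<And>a b. a \<in> A \<Longrightarrow> b \<in> B \<Longrightarrow> ((\<lambda>b. g a b) has_real_derivative gb a b) (at b within B)"
    and h: "\<And>a b. a \<in> A \<Longrightarrow> b \<in> B \<Longrightarrow> ((\<lambda>a. gb a b) has_real_derivative h a b) (at a within A)"
  obtains \<tau> \<xi> where "\<tau> \<in> closed_segment a0 a" "\<xi> \<in> closed_segment b0 b"
    "g a b - g a b0 - (g a0 b - g a0 b0) = h \<tau> \<xi> * (a - a0) * (b - b0)"
proof -
  have sA: "closed_segment a0 a \<subseteq> A" and sB: "closed_segment b0 b \<subseteq> B"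
    using A B by (simp_all add: closed_segment_subset)
  obtain \<xi> where \<xi>: "\<xi> \<in> closed_segment b0 b"
    and m1: "(g a b - g a0 b) - (g a b0 - g a0 b0) = (gb a \<xi> - gb a0 \<xi>) * (b - b0)"
    using mvt_closed_segment[of b0 b "\<lambda>z. g a z - g a0 z" "\<lambda>z. gb a z - gb a0 z" B, OF _ sB]
      A sB by (auto intro!: derivative_intros gb)
  obtain \<tau> where \<tau>: "\<tau> \<in> closed_segment a0 a" and m2: "gb a \<xi> - gb a0 \<xi> = h \<tau> \<xi> * (a - a0)"
    using mvt_closed_segment[of a0 a "\<lambda>w. gb w \<xi>" "\<lambda>w. h w \<xi>" A, OF _ sA] h \<xi> sA sB by blast
  show thesis
    by (rule that[OF \<tau> \<xi>]) (use m1 m2 in \<open>simp add: algebra_simps\<close>)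
qed

lemma mixed_difference_estimate:
  fixes g gb h :: "real \<Rightarrow> real \<Rightarrow> real"
  assumes A: "convex A" "a0 \<in> A" "a \<in> A" and B: "convex B" "b0 \<in> B" "b \<in> B"
    and gb: "\<And>a b. a \<in> A \<Longrightarrow> b \<in> B \<Longrightarrow> ((\<lambda>b. g a b) has_real_derivative gb a b) (at b within B)"
    and h: "\<And>a b. a \<in> A \<Longrightarrow> b \<in> B \<Longrightarrow> ((\<lambda>a. gb a b) has_real_derivative h a b) (at a within A)"
    and near: "\<And>p. p \<in> A \<times> B \<Longrightarrow> dist p (a0, b0) < d \<Longrightarrow> \<bar>h (fst p) (snd p) - h a0 b0\<bar> < e"
    and close: "\<bar>a - a0\<bar> < d/2" "\<bar>b - b0\<bar> < d/2"
  shows "\<bar>g a b - g a b0 - (g a0 b - g a0 b0) - h a0 b0 * ((a - a0) * (b - b0))\<bar>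
    \<le> e * \<bar>(a - a0) * (b - b0)\<bar>"
proof -
  obtain \<tau> \<xi> where \<tau>: "\<tau> \<in> closed_segment a0 a" and \<xi>: "\<xi> \<in> closed_segment b0 b"
    and eq: "g a b - g a b0 - (g a0 b - g a0 b0) = h \<tau> \<xi> * (a - a0) * (b - b0)"
    using mixed_difference_mvt[OF A B gb h] by blast
  have "\<tau> \<in> A" "\<xi> \<in> B"
    using \<tau> \<xi> A B closed_segment_subset by blast+
  moreover have "dist (\<tau>, \<xi>) (a0, b0) < d"
    using dist_in_closed_segment[OF \<tau>] dist_in_closed_segment[OF \<xi>] close
    by (intro dist_Pair_less_halves) (auto simp: dist_real_def abs_minus_commute)
  ultimately have "\<bar>h \<tau> \<xi> - h a0 b0\<bar> \<le> e"
    using near[of "(\<tau>, \<xi>)"] by simp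
  from abs_mult_le[OF this order_refl]
  show ?thesis by (simp add: eq left_diff_distrib mult.assoc)
qed

text \<open>Derivatives are taken within convex sets so that one-sided time derivatives at \<open>t = 0\<close>
  are covered.\<close>

lemma partial_derivatives_commute:
  fixes g ga gb h :: "real \<Rightarrow> real \<Rightarrow> real"
  assumes A: "convex A" "a0 \<in> A" "at a0 within A \<noteq> bot" and B: "convex B" "b0 \<in> B"
    and ga: "\<And>a b. a \<in> A \<Longrightarrow> b \<in> B \<Longrightarrow> ((\<lambda>a. g a b) has_real_derivative ga a b) (at a within A)"
    and gb: "\<And>a b. a \<in> A \<Longrightarrow> b \<in> B \<Longrightarrow> ((\<lambda>b. g a b) has_real_derivative gb a b) (at b within B)"
    and h: "\<And>a b. a \<in> A \<Longrightarrow> b \<in> B \<Longrightarrow> ((\<lambda>a. gb a b) has_real_derivative h a b) (at a within A)"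
    and h_cont: "continuous_on (A \<times> B) (\<lambda>p. h (fst p) (snd p))"
  shows "((\<lambda>b. ga a0 b) has_real_derivative h a0 b0) (at b0 within B)"
  unfolding has_field_derivative_def has_derivative_within_alt
proof (intro conjI allI impI)
  show "bounded_linear ((*) (h a0 b0))" by (rule bounded_linear_mult_right)
  fix e :: real assume e: "e > 0"
  from h_cont A(2) B(2) e obtain d where d: "d > 0"
    and near: "\<And>p. p \<in> A \<times> B \<Longrightarrow> dist p (a0, b0) < d \<Longrightarrow> \<bar>h (fst p) (snd p) - h a0 b0\<bar> < e"
    unfolding continuous_on_iff dist_real_def by (metis SigmaI fst_conv snd_conv)
  show "\<exists>d>0. \<forall>y\<in>B. norm (y - b0) < d \<longrightarrow>
      norm (ga a0 y - ga a0 b0 - h a0 b0 * (y - b0)) \<le> e * norm (y - b0)"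
  proof (intro exI[of _ "d/2"] conjI ballI impI)
    show "0 < d/2" using d by simp
  next
    fix y assume y: "y \<in> B" and yd: "norm (y - b0) < d/2"
    define Q where "Q = (\<lambda>a. (g a y - g a b0 - (g a0 y - g a0 b0)) / (a - a0))"
    have "((\<lambda>a. (g a y - g a0 y) / (a - a0) - (g a b0 - g a0 b0) / (a - a0))
        \<longlongrightarrow> ga a0 y - ga a0 b0) (at a0 within A)"
      using ga[OF A(2) y] ga[OF A(2) B(2)] by (intro tendsto_diff) (simp_all add: has_field_derivative_iff)
    moreover have "(\<lambda>a. (g a y - g a0 y) / (a - a0) - (g a b0 - g a0 b0) / (a - a0)) = Q"
      unfolding Q_def by (rule ext) (simp add: diff_divide_distrib)
    ultimately have "(Q \<longlongrightarrow> ga a0 y - ga a0 b0) (at a0 within A)" by simp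
    then have lim: "((\<lambda>a. \<bar>Q a - h a0 b0 * (y - b0)\<bar>)
        \<longlongrightarrow> \<bar>ga a0 y - ga a0 b0 - h a0 b0 * (y - b0)\<bar>) (at a0 within A)"
      by (intro tendsto_intros)
    have "\<bar>Q a - h a0 b0 * (y - b0)\<bar> \<le> e * \<bar>y - b0\<bar>"
      if a: "a \<in> A" "a \<noteq> a0" "dist a a0 < d/2" for a
    proof -
      have "\<bar>g a y - g a b0 - (g a0 y - g a0 b0) - h a0 b0 * ((a - a0) * (y - b0))\<bar>
          \<le> e * \<bar>(a - a0) * (y - b0)\<bar>"
        using a yd by (intro mixed_difference_estimate[OF A(1,2) a(1) B(1,2) y gb h near])
          (auto simp: dist_real_def)
      moreover have "Q a - h a0 b0 * (y - b0)
          = (g a y - g a b0 - (g a0 y - g a0 b0) - h a0 b0 * ((a - a0) * (y - b0))) / (a - a0)"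
        using a(2) by (simp add: Q_def field_simps)
      ultimately show ?thesis
        using a(2) by (simp add: abs_divide abs_mult divide_le_eq mult_ac)
    qed
    then have "eventually (\<lambda>a. \<bar>Q a - h a0 b0 * (y - b0)\<bar> \<le> e * \<bar>y - b0\<bar>) (at a0 within A)"
      using d by (auto simp: eventually_at intro!: exI[of _ "d/2"])
    from tendsto_upperbound[OF lim this A(3)]
    show "norm (ga a0 y - ga a0 b0 - h a0 b0 * (y - b0)) \<le> e * norm (y - b0)"
      by simp
  qed
qed

lemma C1_strip_time_deriv:
  "C1_strip T g gt gx \<Longrightarrow> t \<in> {0..<T} \<Longrightarrow>
    ((\<lambda>s. g s x) has_real_derivative gt t x) (at t within {0..<T})"
  unfolding C1_strip_def by blast

lemma C1_strip_space_deriv: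
  "C1_strip T g gt gx \<Longrightarrow> t \<in> {0..<T} \<Longrightarrow> ((\<lambda>y. g t y) has_real_derivative gx t x) (at x)"
  unfolding C1_strip_def by blast

lemma C1_strip_cont: "C1_strip T g gt gx \<Longrightarrow> continuous_on ({0..<T} \<times> UNIV) (\<lambda>p. g (fst p) (snd p))"
  unfolding C1_strip_def by blast

lemma C1_strip_time_deriv_cont:
  "C1_strip T g gt gx \<Longrightarrow> continuous_on ({0..<T} \<times> UNIV) (\<lambda>p. gt (fst p) (snd p))"
  unfolding C1_strip_def by blast

lemma C1_strip_space_deriv_cont:
  "C1_strip T g gt gx \<Longrightarrow> continuous_on ({0..<T} \<times> UNIV) (\<lambda>p. gx (fst p) (snd p))"
  unfolding C1_strip_def by blast

lemma C1_strip_add: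
  "C1_strip T g gt gx \<Longrightarrow> C1_strip T h ht hx \<Longrightarrow>
    C1_strip T (\<lambda>t x. g t x + h t x) (\<lambda>t x. gt t x + ht t x) (\<lambda>t x. gx t x + hx t x)"
  unfolding C1_strip_def by (auto intro!: derivative_intros continuous_intros)

lemma C1_strip_diff:
  "C1_strip T g gt gx \<Longrightarrow> C1_strip T h ht hx \<Longrightarrow>
    C1_strip T (\<lambda>t x. g t x - h t x) (\<lambda>t x. gt t x - ht t x) (\<lambda>t x. gx t x - hx t x)"
  unfolding C1_strip_def by (auto intro!: derivative_intros continuous_intros)

lemma C1_strip_minus:
  "C1_strip T g gt gx \<Longrightarrow> C1_strip T (\<lambda>t x. - g t x) (\<lambda>t x. - gt t x) (\<lambda>t x. - gx t x)"
  unfolding C1_strip_def by (auto intro!: derivative_intros continuous_intros)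

lemma C1_strip_power2:
  "C1_strip T g gt gx \<Longrightarrow>
    C1_strip T (\<lambda>t x. (g t x)\<^sup>2) (\<lambda>t x. 2 * g t x * gt t x) (\<lambda>t x. 2 * g t x * gx t x)"
  unfolding C1_strip_def by (auto intro!: derivative_eq_intros continuous_intros)

lemma C1_strip_time_only:
  assumes "\<And>t. (\<phi> has_real_derivative \<phi>' t) (at t)" "continuous_on UNIV \<phi>'"
  shows "C1_strip T (\<lambda>t x. \<phi> t) (\<lambda>t x. \<phi>' t) (\<lambda>t x. 0)"
proof -
  have "continuous_on UNIV \<phi>"
    using assms(1) by (meson DERIV_isCont continuous_at_imp_continuous_on)
  then show ?thesis unfolding C1_strip_def
    by (auto intro!: continuous_intros has_field_derivative_at_within assms(1)
        continuous_on_compose2[of UNIV \<phi>] continuous_on_compose2[OF assms(2)])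
qed

lemma at_within_Ico_nontrivial: "(0::real) \<le> t \<Longrightarrow> t < T \<Longrightarrow> at t within {0..<T} \<noteq> bot"
  using islimpt_Ico[of 0 T t] by (simp add: trivial_limit_within)

lemma C1_strip_DERIV_along_line:
  assumes C: "C1_strip T g gt gx" and s0: "0 < s0" "s0 < T"
  shows "((\<lambda>s. g s (y0 + a * (s - s0))) has_real_derivative gt s0 y0 + a * gx s0 y0) (at s0)"
proof -
  have s0T: "s0 \<in> {0..<T}" using s0 by simp
  have "continuous_on ({0..<T} \<times> UNIV) (\<lambda>p. blinfun_mult_right (gx (fst p) (snd p)))"
    using C1_strip_space_deriv_cont[OF C]
    by (intro continuous_on_compose2[OF bounded_linear.continuous_on[OF
          bounded_linear_blinfun_mult_right continuous_on_id]]) auto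
  then have cont: "continuous (at (s0, y0) within {0..<T} \<times> UNIV) (\<lambda>(s, y). blinfun_mult_right (gx s y))"
    using s0T by (auto simp: continuous_on_eq_continuous_within split_beta')
  have "((\<lambda>(s, y). g s y) has_derivative
      (\<lambda>(ds, dy). gt s0 y0 * ds + blinfun_apply (blinfun_mult_right (gx s0 y0)) dy))
      (at (s0, y0) within {0..<T} \<times> UNIV)"
    by (rule has_derivative_partialsI[OF _ _ cont])
       (use C s0T in \<open>auto simp: C1_strip_def has_field_derivative_def\<close>)
  then have joint: "((\<lambda>p. g (fst p) (snd p)) has_derivative (\<lambda>p. gt s0 y0 * fst p + gx s0 y0 * snd p))
      (at ((\<lambda>s. (s, y0 + a * (s - s0))) s0) within (\<lambda>s. (s, y0 + a * (s - s0))) ` {0..<T})"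
    by (intro has_derivative_subset[OF _ image_subsetI]) (auto simp: split_beta')
  have line: "((\<lambda>s. (s, y0 + a * (s - s0))) has_derivative (\<lambda>ds. (ds, a * ds))) (at s0 within {0..<T})"
    by (auto intro!: derivative_eq_intros)
  from diff_chain_within[OF line joint]
  have "((\<lambda>s. g s (y0 + a * (s - s0))) has_derivative (\<lambda>ds. (gt s0 y0 + a * gx s0 y0) * ds))
      (at s0 within {0..<T})"
    by (simp add: o_def algebra_simps)
  moreover have "at s0 within {0..<T} = at s0"
    by (rule at_within_interior) (use s0 in auto)
  ultimately show ?thesis by (simp add: has_field_derivative_def)
qed

section \<open>Comparison on backward cones of dependence\<close>

definition backward_cone :: "real \<Rightarrow> real \<Rightarrow> real \<Rightarrow> (real \<times> real) set" where
  "backward_cone V t1 x0 = {(s, y). 0 \<le> s \<and> s \<le> t1 \<and> \<bar>y - x0\<bar> \<le> V * (t1 - s)}"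

lemma compact_backward_cone:
  assumes "0 \<le> V"
  shows "compact (backward_cone V t1 x0)"
proof -
  have "closed (backward_cone V t1 x0)"
    unfolding backward_cone_def case_prod_unfold
    by (intro closed_Collect_conj closed_Collect_le continuous_intros)
  moreover have "backward_cone V t1 x0 \<subseteq> {0..t1} \<times> {x0 - V * t1..x0 + V * t1}"
  proof
    fix p assume "p \<in> backward_cone V t1 x0"
    moreover from this have "V * (t1 - fst p) \<le> V * t1"
      using assms by (auto simp: backward_cone_def intro: mult_left_mono)
    ultimately show "p \<in> {0..t1} \<times> {x0 - V * t1..x0 + V * t1}"
      by (auto simp: backward_cone_def)
  qed
  then have "bounded (backward_cone V t1 x0)"
    by (rule bounded_subset[OF bounded_Times[OF bounded_closed_interval bounded_closed_interval]])
  ultimately show ?thesis by (simp add: compact_eq_bounded_closed)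
qed

lemma backward_cone_step_back:
  assumes "(s, y) \<in> backward_cone V t1 x0" "0 \<le> h" "h \<le> s" "\<bar>a\<bar> \<le> V"
  shows "(s - h, y - a * h) \<in> backward_cone V t1 x0"
proof -
  have "\<bar>y - a * h - x0\<bar> \<le> \<bar>y - x0\<bar> + \<bar>a\<bar> * h"
    using assms(2) abs_triangle_ineq4[of "y - x0" "a * h"] by (simp add: abs_mult algebra_simps)
  also have "\<dots> \<le> V * (t1 - s) + V * h"
    using assms by (intro add_mono mult_right_mono) (auto simp: backward_cone_def)
  finally show ?thesis using assms by (auto simp: backward_cone_def algebra_simps)
qed

lemma no_first_zero_on_line:
  assumes C: "C1_strip T W Wt Wx" and ts: "0 < ts" "ts < T" and zero: "W ts ys = 0"
    and decr: "Wt ts ys + a * Wx ts ys < 0"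
    and below: "\<And>h. 0 < h \<Longrightarrow> h \<le> ts \<Longrightarrow> W (ts - h) (ys - a * h) < 0"
  shows False
proof -
  from DERIV_neg_dec_left[OF C1_strip_DERIV_along_line[OF C ts] decr]
  obtain d where d: "d > 0"
    and dec: "\<And>h. h > 0 \<Longrightarrow> h < d \<Longrightarrow> W ts (ys + a * (ts - ts)) < W (ts - h) (ys + a * (ts - h - ts))"
    by blast
  define h where "h = min (d/2) ts"
  have h: "0 < h" "h < d" "h \<le> ts" using d ts by (auto simp: h_def)
  have "W ts ys < W (ts - h) (ys - a * h)" using dec[OF h(1,2)] by simp
  with below[OF h(1,3)] zero show False by simp
qed

lemma first_zero_in_backward_cone:
  fixes W :: "real \<times> real \<Rightarrow> real"
  assumes V: "0 \<le> V" and cont: "continuous_on (backward_cone V t1 x0) W"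
    and apex: "0 \<le> t1" "0 \<le> W (t1, x0)"
    and base: "\<And>y. (0, y) \<in> backward_cone V t1 x0 \<Longrightarrow> W (0, y) < 0"
  obtains ts ys where "(ts, ys) \<in> backward_cone V t1 x0" "0 < ts" "W (ts, ys) = 0"
    "\<And>s y. (s, y) \<in> backward_cone V t1 x0 \<Longrightarrow> s < ts \<Longrightarrow> W (s, y) < 0"
proof -
  define D where "D = backward_cone V t1 x0"
  define S where "S = D \<inter> W -` {0..}"
  have "compact S"
    using compact_backward_cone[OF V] cont
    by (simp add: S_def D_def compact_eq_bounded_closed continuous_closed_preimage bounded_Int)
  then have "compact (fst ` S)"
    by (rule compact_continuous_image[OF continuous_on_fst[OF continuous_on_id]])
  moreover have "(t1, x0) \<in> S"
    using apex by (auto simp: S_def D_def backward_cone_def)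
  ultimately obtain ts where "ts \<in> fst ` S" and earliest: "\<And>s. s \<in> fst ` S \<Longrightarrow> ts \<le> s"
    using compact_attains_inf[of "fst ` S"] by blast
  then obtain ys where first: "(ts, ys) \<in> D" "0 \<le> W (ts, ys)" by (force simp: S_def)
  have before: "W (s, y) < 0" if "(s, y) \<in> D" "s < ts" for s y
    using earliest[of s] that by (force simp: S_def)
  have ts: "0 < ts"
  proof (rule ccontr)
    assume "\<not> 0 < ts"
    with first base[of ys] show False by (auto simp: D_def backward_cone_def)
  qed
  have on_line: "(s, ys) \<in> D" if "0 \<le> s" "s \<le> ts" for s
    using backward_cone_step_back[of ts ys V t1 x0 "ts - s" 0] first(1) V that by (simp add: D_def)
  have "W (ts, ys) \<le> 0"
  proof (rule continuous_le_on_closure[where f="\<lambda>s. W (s, ys)" and S="{0..<ts}"])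
    show "continuous_on (closure {0..<ts}) (\<lambda>s. W (s, ys))"
      using ts on_line by (auto intro!: continuous_on_compose2[OF cont[folded D_def]] continuous_intros)
    show "ts \<in> closure {0..<ts}" using ts by simp
    show "W (s, ys) \<le> 0" if "s \<in> {0..<ts}" for s
      using before[of s ys] on_line[of s] that by simp
  qed
  with first before ts show thesis by (intro that[of ts ys]) (auto simp: D_def)
qed

lemma cone_comparison:
  assumes C1: "C1_strip T W1 W1t W1x" and C2: "C1_strip T W2 W2t W2x"
    and t1: "0 \<le> t1" "t1 < T" and V: "0 \<le> V"
    and init: "\<And>y. (0, y) \<in> backward_cone V t1 x0 \<Longrightarrow> W1 0 y < 0 \<and> W2 0 y < 0"
    and touch1: "\<And>s y. (s, y) \<in> backward_cone V t1 x0 \<Longrightarrow> 0 < s \<Longrightarrow> W1 s y = 0 \<Longrightarrow> W2 s y \<le> 0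
       \<Longrightarrow> \<exists>a. \<bar>a\<bar> \<le> V \<and> W1t s y + a * W1x s y < 0"
    and touch2: "\<And>s y. (s, y) \<in> backward_cone V t1 x0 \<Longrightarrow> 0 < s \<Longrightarrow> W2 s y = 0 \<Longrightarrow> W1 s y \<le> 0
       \<Longrightarrow> \<exists>a. \<bar>a\<bar> \<le> V \<and> W2t s y + a * W2x s y < 0"
  shows "W1 t1 x0 < 0 \<and> W2 t1 x0 < 0"
proof (rule ccontr)
  assume apex: "\<not> (W1 t1 x0 < 0 \<and> W2 t1 x0 < 0)"
  define W where "W = (\<lambda>p. max (W1 (fst p) (snd p)) (W2 (fst p) (snd p)))"
  have "backward_cone V t1 x0 \<subseteq> {0..<T} \<times> UNIV" using t1 by (auto simp: backward_cone_def)
  then have "continuous_on (backward_cone V t1 x0) W"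
    unfolding W_def using C1_strip_cont[OF C1] C1_strip_cont[OF C2]
    by (intro continuous_on_max) (auto elim: continuous_on_subset)
  then obtain ts ys where cone: "(ts, ys) \<in> backward_cone V t1 x0" and "0 < ts"
    and zero: "max (W1 ts ys) (W2 ts ys) = 0"
    and before: "\<And>s y. (s, y) \<in> backward_cone V t1 x0 \<Longrightarrow> s < ts \<Longrightarrow> W (s, y) < 0"
    by (rule first_zero_in_backward_cone[OF V]) (use t1 apex init in \<open>auto simp: W_def\<close>)
  moreover have "ts < T" using cone t1 by (auto simp: backward_cone_def)
  ultimately have ts: "0 < ts" "ts < T" by auto
  have behind: "W1 (ts - h) (ys - a * h) < 0 \<and> W2 (ts - h) (ys - a * h) < 0"
    if "0 < h" "h \<le> ts" "\<bar>a\<bar> \<le> V" for h a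
    using before[OF backward_cone_step_back[OF cone _ that(2,3)]] that(1) by (simp add: W_def)
  show False
  proof (cases "W2 ts ys \<le> W1 ts ys")
    case True
    then obtain a where a: "\<bar>a\<bar> \<le> V" "W1t ts ys + a * W1x ts ys < 0"
      using touch1[OF cone ts(1)] zero by (auto simp: max_def)
    show False
    proof (rule no_first_zero_on_line[OF C1 ts _ a(2)])
      show "W1 ts ys = 0" using zero True by (simp add: max_def)
    qed (use behind a(1) in blast)
  next
    case False
    then obtain a where a: "\<bar>a\<bar> \<le> V" "W2t ts ys + a * W2x ts ys < 0"
      using touch2[OF cone ts(1)] zero by (auto simp: max_def)
    show False
    proof (rule no_first_zero_on_line[OF C2 ts _ a(2)])
      show "W2 ts ys = 0" using zero False by (simp add: max_def)
    qed (use behind a(1) in blast)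
  qed
qed

lemma nonpos_if_less_eps_mult:
  fixes a c :: real
  assumes "0 < c" and "\<And>\<epsilon>. 0 < \<epsilon> \<Longrightarrow> a < \<epsilon> * c"
  shows "a \<le> 0"
proof (rule ccontr)
  assume "\<not> a \<le> 0"
  with assms show False using assms(2)[of "a / c"] by simp
qed

text \<open>A solution of \<open>q\<^sub>t + a q\<^sub>x = c q\<close> with \<open>c \<le> K\<close> cannot reach the barrier
  \<open>-\<epsilon> exp ((K + 1) s)\<close> from above, since the barrier falls faster than \<open>q\<close> can.\<close>

lemma transport_preserves_nonneg:
  assumes C: "C1_strip T q qt qx" and t: "0 \<le> t" "t < T"
    and eq: "\<And>s y. 0 \<le> s \<Longrightarrow> s \<le> t \<Longrightarrow> qt s y + a s y * qx s y = c s y * q s y"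
    and bounds: "\<And>s y. 0 \<le> s \<Longrightarrow> s \<le> t \<Longrightarrow> \<bar>a s y\<bar> \<le> V \<and> c s y \<le> K"
    and init: "\<And>y. 0 \<le> q 0 y"
  shows "0 \<le> q t x"
proof -
  have V: "0 \<le> V" using bounds[of 0 0] t by auto
  have "- q t x < \<epsilon> * exp ((K + 1) * t)" if \<epsilon>: "0 < \<epsilon>" for \<epsilon>
  proof -
    define W where "W = (\<lambda>s y. - \<epsilon> * exp ((K + 1) * s) - q s y)"
    have CW: "C1_strip T W (\<lambda>s y. - \<epsilon> * ((K + 1) * exp ((K + 1) * s)) - qt s y) (\<lambda>s y. 0 - qx s y)"
      unfolding W_def by (rule C1_strip_diff[OF C1_strip_time_only C])
        (auto intro!: derivative_eq_intros continuous_intros)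
    have touch: "\<exists>b. \<bar>b\<bar> \<le> V \<and> - \<epsilon> * ((K + 1) * exp ((K + 1) * s)) - qt s y + b * (0 - qx s y) < 0"
      if "(s, y) \<in> backward_cone V t x" "W s y = 0" for s y
    proof (intro exI conjI)
      have s: "0 \<le> s" "s \<le> t" using that(1) by (auto simp: backward_cone_def)
      show "\<bar>a s y\<bar> \<le> V" using bounds[OF s] by simp
      have "q s y = - \<epsilon> * exp ((K + 1) * s)" using that(2) by (simp add: W_def)
      moreover have "qt s y = c s y * q s y - a s y * qx s y" using eq[OF s, of y] by simp
      ultimately have "- \<epsilon> * ((K + 1) * exp ((K + 1) * s)) - qt s y + a s y * (0 - qx s y)
          = - \<epsilon> * exp ((K + 1) * s) * (K + 1 - c s y)"
        by (simp add: algebra_simps)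
      also have "\<dots> < 0" using \<epsilon> bounds[OF s, of y] by (simp add: mult_pos_pos)
      finally show "- \<epsilon> * ((K + 1) * exp ((K + 1) * s)) - qt s y + a s y * (0 - qx s y) < 0" .
    qed
    have "W t x < 0 \<and> W t x < 0"
    proof (rule cone_comparison[OF CW CW t V])
      fix y show "W 0 y < 0 \<and> W 0 y < 0" using \<epsilon> init[of y] by (simp add: W_def)
    qed (rule touch; assumption)+
    then show ?thesis by (simp add: W_def)
  qed
  then have "- q t x \<le> 0" by (rule nonpos_if_less_eps_mult[OF exp_gt_zero])
  then show ?thesis by simp
qed

lemma transport_preserves_joint_upper_bound:
  assumes C1: "C1_strip T q1 q1t q1x" and C2: "C1_strip T q2 q2t q2x" and t: "0 \<le> t" "t < T"
    and speeds: "\<And>s y. 0 \<le> s \<Longrightarrow> s \<le> t \<Longrightarrow> \<bar>a s y\<bar> \<le> V \<and> \<bar>b s y\<bar> \<le> V"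
    and init: "\<And>y. q1 0 y \<le> B \<and> q2 0 y \<le> B"
    and touch1: "\<And>s y. 0 < s \<Longrightarrow> s \<le> t \<Longrightarrow> B < q1 s y \<Longrightarrow> q2 s y \<le> q1 s y
      \<Longrightarrow> q1t s y + a s y * q1x s y \<le> 0"
    and touch2: "\<And>s y. 0 < s \<Longrightarrow> s \<le> t \<Longrightarrow> B < q2 s y \<Longrightarrow> q1 s y \<le> q2 s y
      \<Longrightarrow> q2t s y + b s y * q2x s y \<le> 0"
  shows "q1 t x \<le> B \<and> q2 t x \<le> B"
proof -
  have V: "0 \<le> V" using speeds[of 0 0] t by auto
  have below: "q1 t x - B < \<epsilon> * (1 + t) \<and> q2 t x - B < \<epsilon> * (1 + t)" if \<epsilon>: "0 < \<epsilon>" for \<epsilon>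
  proof -
    define \<beta> where "\<beta> = (\<lambda>s. B + \<epsilon> * (1 + s))"
    have C\<beta>: "C1_strip T (\<lambda>s y. \<beta> s) (\<lambda>s y. \<epsilon>) (\<lambda>s y. 0)"
      unfolding \<beta>_def by (rule C1_strip_time_only) (auto intro!: derivative_eq_intros)
    have in_cone: "0 < s \<Longrightarrow> (s, y) \<in> backward_cone V t x \<Longrightarrow> B < \<beta> s \<and> s \<le> t" for s y
      using \<epsilon> by (auto simp: \<beta>_def backward_cone_def intro: mult_pos_pos)
    have "q1 t x - \<beta> t < 0 \<and> q2 t x - \<beta> t < 0"
    proof (rule cone_comparison[OF C1_strip_diff[OF C1 C\<beta>] C1_strip_diff[OF C2 C\<beta>] t V])
      fix y show "q1 0 y - \<beta> 0 < 0 \<and> q2 0 y - \<beta> 0 < 0" using init[of y] \<epsilon> by (simp add: \<beta>_def)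
    next
      fix s y assume "(s, y) \<in> backward_cone V t x" "0 < s" "q1 s y - \<beta> s = 0" "q2 s y - \<beta> s \<le> 0"
      with in_cone have "q1t s y + a s y * q1x s y \<le> 0" "\<bar>a s y\<bar> \<le> V"
        using touch1 speeds by force+
      with \<epsilon> show "\<exists>a. \<bar>a\<bar> \<le> V \<and> q1t s y - \<epsilon> + a * (q1x s y - 0) < 0" by auto
    next
      fix s y assume "(s, y) \<in> backward_cone V t x" "0 < s" "q2 s y - \<beta> s = 0" "q1 s y - \<beta> s \<le> 0"
      with in_cone have "q2t s y + b s y * q2x s y \<le> 0" "\<bar>b s y\<bar> \<le> V"
        using touch2 speeds by force+
      with \<epsilon> show "\<exists>a. \<bar>a\<bar> \<le> V \<and> q2t s y - \<epsilon> + a * (q2x s y - 0) < 0" by auto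
    qed
    then show ?thesis by (simp add: \<beta>_def)
  qed
  have "0 < 1 + t" using t by simp
  from nonpos_if_less_eps_mult[OF this] below
  have "q1 t x - B \<le> 0" "q2 t x - B \<le> 0" by blast+
  then show ?thesis by simp
qed

lemma transport_preserves_upper_bound:
  assumes C: "C1_strip T q qt qx" and t: "0 \<le> t" "t < T"
    and speed: "\<And>s y. 0 \<le> s \<Longrightarrow> s \<le> t \<Longrightarrow> \<bar>a s y\<bar> \<le> V"
    and init: "\<And>y. q 0 y \<le> B"
    and touch: "\<And>s y. 0 < s \<Longrightarrow> s \<le> t \<Longrightarrow> B < q s y \<Longrightarrow> qt s y + a s y * qx s y \<le> 0"
  shows "q t x \<le> B"
  using transport_preserves_joint_upper_bound[OF C C t, where a=a and b=a and V=V and B=B]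
    speed init touch by blast

lemma transport_joint_exponential_bound:
  assumes C1: "C1_strip T q1 q1t q1x" and C2: "C1_strip T q2 q2t q2x" and t: "0 \<le> t" "t < T"
    and Q: "0 < Q"
    and speeds: "\<And>s y. 0 \<le> s \<Longrightarrow> s \<le> t \<Longrightarrow> \<bar>a s y\<bar> \<le> V \<and> \<bar>b s y\<bar> \<le> V"
    and init: "\<And>y. \<bar>q1 0 y\<bar> < Q \<and> \<bar>q2 0 y\<bar> < Q"
    and touch1: "\<And>s y. 0 < s \<Longrightarrow> s \<le> t \<Longrightarrow> \<bar>q1 s y\<bar> = Q * exp (E * s) \<Longrightarrow> \<bar>q2 s y\<bar> \<le> Q * exp (E * s)
      \<Longrightarrow> q1 s y * (q1t s y + a s y * q1x s y) < E * (Q * exp (E * s))\<^sup>2"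
    and touch2: "\<And>s y. 0 < s \<Longrightarrow> s \<le> t \<Longrightarrow> \<bar>q2 s y\<bar> = Q * exp (E * s) \<Longrightarrow> \<bar>q1 s y\<bar> \<le> Q * exp (E * s)
      \<Longrightarrow> q2 s y * (q2t s y + b s y * q2x s y) < E * (Q * exp (E * s))\<^sup>2"
  shows "\<bar>q1 t x\<bar> < Q * exp (E * t) \<and> \<bar>q2 t x\<bar> < Q * exp (E * t)"
proof -
  have V: "0 \<le> V" using speeds[of 0 0] t by auto
  define \<Phi> where "\<Phi> s = Q * exp (E * s)" for s
  have \<Phi>: "0 < \<Phi> s" for s using Q by (simp add: \<Phi>_def)
  have C\<Phi>: "C1_strip T (\<lambda>s y. (\<Phi> s)\<^sup>2) (\<lambda>s y. 2 * E * (\<Phi> s)\<^sup>2) (\<lambda>s y. 0)"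
    unfolding \<Phi>_def by (rule C1_strip_time_only)
      (auto intro!: derivative_eq_intros continuous_intros simp: power2_eq_square)
  have sq_less: "z\<^sup>2 - (\<Phi> s)\<^sup>2 < 0 \<longleftrightarrow> \<bar>z\<bar> < \<Phi> s"
    and sq_le: "z\<^sup>2 - (\<Phi> s)\<^sup>2 \<le> 0 \<longleftrightarrow> \<bar>z\<bar> \<le> \<Phi> s" for z s
    using power2_le_iff_abs_le[of "\<Phi> s" z] abs_le_square_iff[of "\<Phi> s" z] \<Phi>[of s]
    by (auto simp: not_le[symmetric])
  have sq_eq: "z\<^sup>2 - (\<Phi> s)\<^sup>2 = 0 \<longleftrightarrow> \<bar>z\<bar> = \<Phi> s" for z s
    using sq_less[of z s] sq_le[of z s] by linarith
  have "(q1 t x)\<^sup>2 - (\<Phi> t)\<^sup>2 < 0 \<and> (q2 t x)\<^sup>2 - (\<Phi> t)\<^sup>2 < 0"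
  proof (rule cone_comparison[OF C1_strip_diff[OF C1_strip_power2[OF C1] C\<Phi>]
        C1_strip_diff[OF C1_strip_power2[OF C2] C\<Phi>] t V])
    fix y show "(q1 0 y)\<^sup>2 - (\<Phi> 0)\<^sup>2 < 0 \<and> (q2 0 y)\<^sup>2 - (\<Phi> 0)\<^sup>2 < 0"
      unfolding sq_less using init[of y] by (simp add: \<Phi>_def)
  next
    fix s y assume "(s, y) \<in> backward_cone V t x" "0 < s"
      and zero: "(q1 s y)\<^sup>2 - (\<Phi> s)\<^sup>2 = 0" and other: "(q2 s y)\<^sup>2 - (\<Phi> s)\<^sup>2 \<le> 0"
    moreover from zero have "\<bar>q1 s y\<bar> = \<Phi> s" by (simp only: sq_eq)
    moreover from other have "\<bar>q2 s y\<bar> \<le> \<Phi> s" by (simp only: sq_le)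
    ultimately have "q1 s y * (q1t s y + a s y * q1x s y) < E * (\<Phi> s)\<^sup>2" "\<bar>a s y\<bar> \<le> V"
      using touch1[folded \<Phi>_def] speeds by (auto simp: backward_cone_def)
    then show "\<exists>a. \<bar>a\<bar> \<le> V \<and> 2 * q1 s y * q1t s y - 2 * E * (\<Phi> s)\<^sup>2 + a * (2 * q1 s y * q1x s y - 0) < 0"
      by (intro exI[of _ "a s y"]) (auto simp: algebra_simps)
  next
    fix s y assume "(s, y) \<in> backward_cone V t x" "0 < s"
      and zero: "(q2 s y)\<^sup>2 - (\<Phi> s)\<^sup>2 = 0" and other: "(q1 s y)\<^sup>2 - (\<Phi> s)\<^sup>2 \<le> 0"
    moreover from zero have "\<bar>q2 s y\<bar> = \<Phi> s" by (simp only: sq_eq)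
    moreover from other have "\<bar>q1 s y\<bar> \<le> \<Phi> s" by (simp only: sq_le)
    ultimately have "q2 s y * (q2t s y + b s y * q2x s y) < E * (\<Phi> s)\<^sup>2" "\<bar>b s y\<bar> \<le> V"
      using touch2[folded \<Phi>_def] speeds by (auto simp: backward_cone_def)
    then show "\<exists>a. \<bar>a\<bar> \<le> V \<and> 2 * q2 s y * q2t s y - 2 * E * (\<Phi> s)\<^sup>2 + a * (2 * q2 s y * q2x s y - 0) < 0"
      by (intro exI[of _ "b s y"]) (auto simp: algebra_simps)
  qed
  then show ?thesis unfolding sq_less by (simp add: \<Phi>_def)
qed

lemma continuous_bounded_on_interval:
  fixes h :: "real \<Rightarrow> real"
  assumes "continuous_on UNIV h"
  obtains C where "\<And>v. \<bar>v\<bar> \<le> B \<Longrightarrow> \<bar>h v\<bar> \<le> C"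
proof -
  have "compact (h ` {-B..B})"
    by (rule compact_continuous_image[OF continuous_on_subset[OF assms] compact_Icc]) auto
  then obtain C where "\<forall>z\<in>h ` {-B..B}. norm z \<le> C"
    using compact_imp_bounded bounded_iff by blast
  then show thesis by (intro that[of C]) force
qed

lemma bdd_strip_bound:
  assumes "bdd_strip T g" "t \<in> {0..<T}"
  obtains B where "\<And>s y. 0 \<le> s \<Longrightarrow> s \<le> t \<Longrightarrow> \<bar>g s y\<bar> \<le> B"
proof -
  from assms obtain B where "\<forall>z\<in>(\<lambda>p. g (fst p) (snd p)) ` ({0..t} \<times> UNIV). norm z \<le> B"
    unfolding bdd_strip_def bounded_iff by blast
  then show thesis by (intro that[of B]) force
qed

lemma abs_le_supnorm: "bounded (range g) \<Longrightarrow> \<bar>g y\<bar> \<le> supnorm g"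
  unfolding supnorm_def
  by (rule cSup_upper) (auto simp: bounded_iff bdd_above_def)

lemma supnorm_le: "(\<And>x. \<bar>g x\<bar> \<le> c) \<Longrightarrow> supnorm g \<le> c"
  unfolding supnorm_def by (rule cSup_least) auto

lemma growth_constant_bounds:
  fixes F M :: real
  assumes F: "0 \<le> F" and M: "0 \<le> M"
  defines "G \<equiv> (F + 1) * max (M ^ 3) 1"
  shows "1 \<le> G" "M \<le> G" "F * M \<le> G" "F * M ^ 3 \<le> G"
proof -
  have M_le: "M \<le> max (M ^ 3) 1"
  proof (cases "M \<le> 1")
    case False
    then have "M * 1 \<le> M * M\<^sup>2" using M by (intro mult_left_mono) (auto simp: one_le_power)
    then show ?thesis by (simp add: power3_eq_cube power2_eq_square)
  qed auto
  have "1 * max (M ^ 3) 1 \<le> (F + 1) * max (M ^ 3) 1" using F by (intro mult_right_mono) auto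
  then have le_G: "max (M ^ 3) 1 \<le> G" by (simp add: G_def)
  show "1 \<le> G" "M \<le> G" using le_G M_le by linarith+
  show "F * M \<le> G" "F * M ^ 3 \<le> G"
    unfolding G_def using F M M_le by (auto intro!: mult_mono)
qed

lemma product_below_growth:
  fixes p R G \<Phi> :: real
  assumes "\<bar>p\<bar> \<le> \<Phi>" "\<bar>R\<bar> \<le> 5 * G * \<Phi>" "0 < G" "0 < \<Phi>"
  shows "p * R < 12 * G * \<Phi>\<^sup>2"
proof -
  have "p * R \<le> \<Phi> * (5 * G * \<Phi>)" using abs_mult_le[OF assms(1,2)] by linarith
  also have "\<dots> < 12 * G * \<Phi>\<^sup>2" using assms(3,4) by (simp add: power2_eq_square)
  finally show ?thesis .
qed

section \<open>A priori bounds for classical solutions\<close>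

locale classical_solution =
  fixes f :: "real \<Rightarrow> real" and ustar :: real
    and rho0 rho0' u0 u0' u0'' :: "real \<Rightarrow> real"
    and T :: real
    and rho rhot rhox u ut ux uxx rhoxt rhoxx ext exx :: "real \<Rightarrow> real \<Rightarrow> real"
  assumes f_smooth: "smooth_real f"
    and f_dec: "\<And>v. deriv f v \<le> 0"
    and ustar: "f ustar = ustar"
    and rho0_der: "\<And>x. (rho0 has_real_derivative rho0' x) (at x)"
    and rho0_bdd: "bounded (range rho0)" and rho0'_bdd: "bounded (range rho0')"
    and u0_der: "\<And>x. (u0 has_real_derivative u0' x) (at x)"
    and u0'_der: "\<And>x. (u0' has_real_derivative u0'' x) (at x)"
    and u0_bdd: "bounded (range u0)" and u0'_bdd: "bounded (range u0')"
    and u0''_bdd: "bounded (range u0'')"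
    and rho0_nonneg: "\<And>x. rho0 x \<ge> 0"
    and e0_nonneg: "\<And>x. u0' x + rho0 x \<ge> 0"
    and rho_C1: "C1_strip T rho rhot rhox"
    and u_C1: "C1_strip T u ut ux"
    and u_bdd: "bdd_strip T u" and ux_bdd: "bdd_strip T ux"
    and eq_rho: "\<And>t x. t \<in> {0..<T} \<Longrightarrow>
        ((\<lambda>y. rho t y * f (u t y)) has_real_derivative (- rhot t x)) (at x)"
    and eq_u: "\<And>t x. t \<in> {0..<T} \<Longrightarrow>
        ut t x + u t x * ux t x = rho t x * (f (u t x) - u t x)"
    and rho_init: "\<And>x. rho 0 x = rho0 x" and u_init: "\<And>x. u 0 x = u0 x"
    and ux_der: "\<And>t x. t \<in> {0..<T} \<Longrightarrow> ((\<lambda>y. ux t y) has_real_derivative uxx t x) (at x)"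
    and rhox_C1: "C1_strip T rhox rhoxt rhoxx"
    and uxx_rhox_C1: "C1_strip T (\<lambda>t x. uxx t x + rhox t x) ext exx"
begin

definition f' :: "real \<Rightarrow> real" where "f' = deriv f"
definition f'' :: "real \<Rightarrow> real" where "f'' = deriv (deriv f)"

lemma DERIV_f: "(f has_real_derivative f' v) (at v)"
  using f_smooth DERIV_deriv_iff_real_differentiable unfolding smooth_real_def f'_def
  by (metis funpow_0)

lemma DERIV_f': "(f' has_real_derivative f'' v) (at v)"
  using f_smooth DERIV_deriv_iff_real_differentiable unfolding smooth_real_def f'_def f''_def
  by (metis One_nat_def funpow.simps(2) funpow_0 o_apply)

lemma continuous_f'': "continuous_on UNIV f''"
proof -
  have "((deriv ^^ 2) f) differentiable (at v)" for v
    using f_smooth unfolding smooth_real_def by blast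
  then show ?thesis unfolding f''_def
    by (intro continuous_at_imp_continuous_on ballI differentiable_imp_continuous_within)
       (simp add: numeral_2_eq_2)
qed

lemma continuous_f: "continuous_on UNIV f"
  using DERIV_f by (meson DERIV_isCont continuous_at_imp_continuous_on)

lemma continuous_f': "continuous_on UNIV f'"
  using DERIV_f' by (meson DERIV_isCont continuous_at_imp_continuous_on)

lemma DERIV_f_compose[derivative_intros]:
  "(g has_real_derivative g') (at x within S) \<Longrightarrow>
    ((\<lambda>x. f (g x)) has_real_derivative f' (g x) * g') (at x within S)"
  using DERIV_chain2[OF DERIV_f] by blast

lemma DERIV_f'_compose[derivative_intros]:
  "(g has_real_derivative g') (at x within S) \<Longrightarrow>
    ((\<lambda>x. f' (g x)) has_real_derivative f'' (g x) * g') (at x within S)"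
  using DERIV_chain2[OF DERIV_f'] by blast

lemmas continuous_on_f_compose[continuous_intros] =
  continuous_on_compose2[OF continuous_f _ subset_UNIV]
  continuous_on_compose2[OF continuous_f' _ subset_UNIV]
  continuous_on_compose2[OF continuous_f'' _ subset_UNIV]

lemma f'_nonpos: "f' v \<le> 0"
  using f_dec by (simp add: f'_def)

lemma f_antimono: "x \<le> y \<Longrightarrow> f y \<le> f x"
  by (rule DERIV_nonpos_imp_nonincreasing) (use DERIV_f f'_nonpos in auto)

lemma rhot_eq:
  "t \<in> {0..<T} \<Longrightarrow> rhot t x = - (rhox t x * f (u t x) + rho t x * f' (u t x) * ux t x)"
proof -
  assume t: "t \<in> {0..<T}"
  have "((\<lambda>y. rho t y * f (u t y)) has_real_derivative
      rhox t x * f (u t x) + rho t x * (f' (u t x) * ux t x)) (at x)"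
    using C1_strip_space_deriv[OF rho_C1 t] C1_strip_space_deriv[OF u_C1 t]
    by (auto intro!: derivative_eq_intros)
  from DERIV_unique[OF eq_rho[OF t] this] show ?thesis by (simp add: algebra_simps)
qed

text \<open>The time derivative of \<open>u\<^sub>x\<close>: the \<open>x\<close>-derivative of the equation for \<open>u\<close>, transferred to
  \<open>u\<^sub>x\<close> by the symmetry of mixed partials (\<open>DERIV_ux_time\<close>).\<close>

definition uxt :: "real \<Rightarrow> real \<Rightarrow> real" where
  "uxt t x = - ux t x * ux t x - u t x * uxx t x + rhox t x * (f (u t x) - u t x)
    + rho t x * (f' (u t x) - 1) * ux t x"

lemma continuous_uxx: "continuous_on ({0..<T} \<times> UNIV) (\<lambda>p. uxx (fst p) (snd p))"
  using continuous_on_diff[OF C1_strip_cont[OF uxx_rhox_C1] C1_strip_cont[OF rhox_C1]] by simp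

lemma continuous_uxt: "continuous_on ({0..<T} \<times> UNIV) (\<lambda>p. uxt (fst p) (snd p))"
  unfolding uxt_def
  using rho_C1 u_C1 rhox_C1 continuous_uxx
  by (intro continuous_intros) (auto dest: C1_strip_cont C1_strip_space_deriv_cont)

lemma DERIV_ut_space: "t \<in> {0..<T} \<Longrightarrow> ((\<lambda>y. ut t y) has_real_derivative uxt t x) (at x)"
proof -
  assume t: "t \<in> {0..<T}"
  have "(\<lambda>y. ut t y) = (\<lambda>y. - u t y * ux t y + rho t y * (f (u t y) - u t y))"
    using eq_u[OF t] by (auto simp: algebra_simps)
  then show ?thesis
    using C1_strip_space_deriv[OF rho_C1 t] C1_strip_space_deriv[OF u_C1 t] ux_der[OF t]
    unfolding uxt_def by (auto intro!: derivative_eq_intros simp: algebra_simps)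
qed

lemma DERIV_ux_time:
  "t \<in> {0..<T} \<Longrightarrow> ((\<lambda>s. ux s x) has_real_derivative uxt t x) (at t within {0..<T})"
proof -
  assume t: "t \<in> {0..<T}"
  have "continuous_on (UNIV \<times> {0..<T}) (\<lambda>p. uxt (snd p) (fst p))"
    by (rule continuous_on_compose2[OF continuous_uxt, of _ prod.swap, simplified])
       (auto intro: continuous_intros)
  then show ?thesis
    using t C1_strip_space_deriv[OF u_C1] C1_strip_time_deriv[OF u_C1] DERIV_ut_space
    by (intro partial_derivatives_commute[where g="\<lambda>a b. u b a" and ga="\<lambda>a b. ux b a"
          and gb="\<lambda>a b. ut b a" and h="\<lambda>a b. uxt b a" and A=UNIV and B="{0..<T}"])
       (auto simp: convex_real_interval)
qed

lemma ux_C1: "C1_strip T ux uxt uxx"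
  unfolding C1_strip_def
  using DERIV_ux_time ux_der C1_strip_space_deriv_cont[OF u_C1] continuous_uxt continuous_uxx by auto

definition e :: "real \<Rightarrow> real \<Rightarrow> real" where "e t x = ux t x + rho t x"
definition et :: "real \<Rightarrow> real \<Rightarrow> real" where "et t x = uxt t x + rhot t x"
definition ex :: "real \<Rightarrow> real \<Rightarrow> real" where "ex t x = uxx t x + rhox t x"

lemma e_C1: "C1_strip T e et ex"
  unfolding e_def et_def ex_def by (rule C1_strip_add[OF ux_C1 rho_C1])

lemma ex_C1: "C1_strip T ex ext exx"
  using uxx_rhox_C1 unfolding ex_def[abs_def] .

lemma et_eq: "t \<in> {0..<T} \<Longrightarrow> et t x = - ux t x * e t x - u t x * ex t x"
  unfolding et_def e_def ex_def uxt_def using rhot_eq[of t x] by (simp add: algebra_simps)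

lemma rhoxt_eq:
  assumes t: "t \<in> {0..<T}"
  shows "rhoxt t x = - rhoxx t x * f (u t x) - 2 * rhox t x * f' (u t x) * ux t x
    - rho t x * f'' (u t x) * (ux t x)\<^sup>2 - rho t x * f' (u t x) * uxx t x"
proof -
  have "((\<lambda>y. rhot t y) has_real_derivative rhoxt t x) (at x)"
    using t C1_strip_time_deriv[OF rho_C1] C1_strip_space_deriv[OF rho_C1]
      C1_strip_time_deriv[OF rhox_C1] C1_strip_time_deriv_cont[OF rhox_C1]
    by (intro partial_derivatives_commute[where g=rho and ga=rhot and gb=rhox and h=rhoxt
          and A="{0..<T}" and B=UNIV])
       (auto simp: convex_real_interval at_within_Ico_nontrivial)
  moreover have "(\<lambda>y. rhot t y) = (\<lambda>y. - (rhox t y * f (u t y) + rho t y * f' (u t y) * ux t y))"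
    using rhot_eq[OF t] by auto
  ultimately have "((\<lambda>y. - (rhox t y * f (u t y) + rho t y * f' (u t y) * ux t y))
      has_real_derivative rhoxt t x) (at x)"
    by simp
  moreover have "((\<lambda>y. - (rhox t y * f (u t y) + rho t y * f' (u t y) * ux t y)) has_real_derivative
      - (rhoxx t x * f (u t x) + rhox t x * (f' (u t x) * ux t x))
      - (rhox t x * f' (u t x) * ux t x + rho t x * (f'' (u t x) * ux t x) * ux t x
         + rho t x * f' (u t x) * uxx t x)) (at x)"
    using C1_strip_space_deriv[OF rhox_C1 t] C1_strip_space_deriv[OF rho_C1 t]
      C1_strip_space_deriv[OF u_C1 t] ux_der[OF t]
    by (auto intro!: derivative_eq_intros) (simp add: algebra_simps)
  ultimately have "rhoxt t x = - (rhoxx t x * f (u t x) + rhox t x * (f' (u t x) * ux t x))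
      - (rhox t x * f' (u t x) * ux t x + rho t x * (f'' (u t x) * ux t x) * ux t x
         + rho t x * f' (u t x) * uxx t x)"
    by (rule DERIV_unique)
  then show ?thesis by (simp add: power2_eq_square algebra_simps)
qed

lemma u_ux_bounded:
  assumes "t \<in> {0..<T}"
  obtains B where "\<And>s y. 0 \<le> s \<Longrightarrow> s \<le> t \<Longrightarrow> \<bar>u s y\<bar> \<le> B \<and> \<bar>ux s y\<bar> \<le> B"
proof -
  obtain B1 where B1: "\<And>s y. 0 \<le> s \<Longrightarrow> s \<le> t \<Longrightarrow> \<bar>u s y\<bar> \<le> B1"
    using bdd_strip_bound[OF u_bdd assms] by blast
  obtain B2 where B2: "\<And>s y. 0 \<le> s \<Longrightarrow> s \<le> t \<Longrightarrow> \<bar>ux s y\<bar> \<le> B2"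
    using bdd_strip_bound[OF ux_bdd assms] by blast
  have "\<bar>u s y\<bar> \<le> max B1 B2 \<and> \<bar>ux s y\<bar> \<le> max B1 B2" if "0 \<le> s" "s \<le> t" for s y
    using B1[OF that, of y] B2[OF that, of y] by (simp add: le_max_iff_disj)
  then show thesis by (rule that)
qed

lemma speeds_bounded:
  assumes "t \<in> {0..<T}"
  obtains V where "\<And>s y. 0 \<le> s \<Longrightarrow> s \<le> t \<Longrightarrow> \<bar>f (u s y)\<bar> \<le> V \<and> \<bar>u s y\<bar> \<le> V"
proof -
  obtain B where B: "\<And>s y. 0 \<le> s \<Longrightarrow> s \<le> t \<Longrightarrow> \<bar>u s y\<bar> \<le> B \<and> \<bar>ux s y\<bar> \<le> B"
    using u_ux_bounded[OF assms] by blast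
  obtain C where C: "\<And>v. \<bar>v\<bar> \<le> B \<Longrightarrow> \<bar>f v\<bar> \<le> C"
    using continuous_bounded_on_interval[OF continuous_f] by blast
  have "\<bar>f (u s y)\<bar> \<le> max B C \<and> \<bar>u s y\<bar> \<le> max B C" if "0 \<le> s" "s \<le> t" for s y
    using B[OF that, of y] C[of "u s y"] by (simp add: le_max_iff_disj)
  then show thesis by (rule that)
qed

lemma rho_nonneg:
  assumes t: "t \<in> {0..<T}"
  shows "0 \<le> rho t x"
proof -
  obtain V where V: "\<And>s y. 0 \<le> s \<Longrightarrow> s \<le> t \<Longrightarrow> \<bar>f (u s y)\<bar> \<le> V \<and> \<bar>u s y\<bar> \<le> V"
    using speeds_bounded[OF t] by blast
  obtain B where B: "\<And>s y. 0 \<le> s \<Longrightarrow> s \<le> t \<Longrightarrow> \<bar>u s y\<bar> \<le> B \<and> \<bar>ux s y\<bar> \<le> B"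
    using u_ux_bounded[OF t] by blast
  obtain C where C: "\<And>v. \<bar>v\<bar> \<le> B \<Longrightarrow> \<bar>f' v\<bar> \<le> C"
    using continuous_bounded_on_interval[OF continuous_f'] by blast
  show ?thesis
  proof (rule transport_preserves_nonneg[OF rho_C1 _ _ _ _ rho0_nonneg[folded rho_init],
        where a="\<lambda>s y. f (u s y)" and c="\<lambda>s y. - f' (u s y) * ux s y" and V=V and K="C * B"])
    fix s y assume s: "0 \<le> s" "s \<le> t"
    then have "s \<in> {0..<T}" using t by auto
    then show "rhot s y + f (u s y) * rhox s y = - f' (u s y) * ux s y * rho s y"
      by (simp add: rhot_eq algebra_simps)
    have "\<bar>f' (u s y) * ux s y\<bar> \<le> C * B" using s B C by (intro abs_mult_le) auto
    then show "\<bar>f (u s y)\<bar> \<le> V \<and> - f' (u s y) * ux s y \<le> C * B" using V[OF s] by auto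
  qed (use t in auto)
qed

lemma ux_init:
  assumes "0 < T" shows "ux 0 y = u0' y"
proof -
  have "(u0 has_real_derivative ux 0 y) (at y)"
    using C1_strip_space_deriv[OF u_C1, of 0 y] assms by (simp add: u_init)
  then show ?thesis using DERIV_unique u0_der by blast
qed

lemma rhox_init:
  assumes "0 < T" shows "rhox 0 y = rho0' y"
proof -
  have "(rho0 has_real_derivative rhox 0 y) (at y)"
    using C1_strip_space_deriv[OF rho_C1, of 0 y] assms by (simp add: rho_init)
  then show ?thesis using DERIV_unique rho0_der by blast
qed

lemma uxx_init:
  assumes "0 < T" shows "uxx 0 y = u0'' y"
proof -
  have "(u0' has_real_derivative uxx 0 y) (at y)"
    using ux_der[of 0 y] assms by (simp add: ux_init)
  then show ?thesis using DERIV_unique u0'_der by blast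
qed

lemma e_nonneg:
  assumes t: "t \<in> {0..<T}"
  shows "0 \<le> e t x"
proof -
  obtain B where B: "\<And>s y. 0 \<le> s \<Longrightarrow> s \<le> t \<Longrightarrow> \<bar>u s y\<bar> \<le> B \<and> \<bar>ux s y\<bar> \<le> B"
    using u_ux_bounded[OF t] by blast
  show ?thesis
  proof (rule transport_preserves_nonneg[OF e_C1, where a=u and c="\<lambda>s y. - ux s y" and V=B and K=B])
    fix s y assume s: "0 \<le> s" "s \<le> t"
    then have "s \<in> {0..<T}" using t by auto
    then show "et s y + u s y * ex s y = - ux s y * e s y" by (simp add: et_eq)
    show "\<bar>u s y\<bar> \<le> B \<and> - ux s y \<le> B" using B[OF s, of y] by auto
  next
    fix y show "0 \<le> e 0 y"
      using t e0_nonneg[of y] rho_init[of y] ux_init[of y] by (simp add: e_def)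
  qed (use t in auto)
qed

definition u_min :: real where "u_min = min (Inf (range u0)) ustar"
definition u_max :: real where "u_max = max (Sup (range u0)) ustar"

text \<open>The invariant region for \<open>u\<close>: above the fixed point \<open>u*\<close> of the decreasing \<open>f\<close> the
  source \<open>\<rho>(f(u) - u)\<close> is nonpositive, below it nonnegative.\<close>

lemma u_range:
  assumes t: "t \<in> {0..<T}"
  shows "u_min \<le> u t x" "u t x \<le> u_max"
proof -
  obtain V where V: "\<And>s y. 0 \<le> s \<Longrightarrow> s \<le> t \<Longrightarrow> \<bar>f (u s y)\<bar> \<le> V \<and> \<bar>u s y\<bar> \<le> V"
    using speeds_bounded[OF t] by blast
  have t': "0 \<le> t" "t < T" and sT: "\<And>s. 0 < s \<Longrightarrow> s \<le> t \<Longrightarrow> s \<in> {0..<T}" using t by auto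
  have "u0 y \<le> Sup (range u0)" "Inf (range u0) \<le> u0 y" for y
    using u0_bdd by (auto intro: cSup_upper cInf_lower bounded_imp_bdd_above bounded_imp_bdd_below)
  then have init: "u 0 y \<le> u_max" "- u 0 y \<le> - u_min" for y
    by (auto simp: u_init u_max_def u_min_def le_max_iff_disj min_le_iff_disj)
  show "u t x \<le> u_max"
  proof (rule transport_preserves_upper_bound[OF u_C1 t', where a=u and V=V])
    fix s y assume s: "0 < s" "s \<le> t" and above: "u_max < u s y"
    then have "ustar < u s y" by (simp add: u_max_def)
    with f_antimono[of ustar "u s y"] have "f (u s y) - u s y \<le> 0" by (simp add: ustar)
    then have "rho s y * (f (u s y) - u s y) \<le> 0"
      using rho_nonneg[OF sT[OF s]] by (rule mult_nonneg_nonpos[rotated])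
    with eq_u[OF sT[OF s], of y] show "ut s y + u s y * ux s y \<le> 0" by simp
  qed (use V init in auto)
  have "- u t x \<le> - u_min"
  proof (rule transport_preserves_upper_bound[OF C1_strip_minus[OF u_C1] t', where a=u and V=V])
    fix s y assume s: "0 < s" "s \<le> t" and below: "- u_min < - u s y"
    then have "u s y < ustar" by (simp add: u_min_def)
    with f_antimono[of "u s y" ustar] have "0 \<le> f (u s y) - u s y" by (simp add: ustar)
    then have "0 \<le> rho s y * (f (u s y) - u s y)"
      using rho_nonneg[OF sT[OF s]] by (rule mult_nonneg_nonneg[rotated])
    with eq_u[OF sT[OF s], of y] show "- ut s y + u s y * - ux s y \<le> 0" by simp
  qed (use V init in auto)
  then show "u_min \<le> u t x" by simp
qed

definition M :: real where "M = max (Sup (range rho0)) (Sup (range (\<lambda>x. u0' x + rho0 x)))"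

lemma init_le_M: "rho0 y \<le> M" "u0' y + rho0 y \<le> M"
proof -
  have "bounded (range (\<lambda>x. u0' x + rho0 x))"
    using bounded_plus_comp[OF u0'_bdd rho0_bdd] .
  then have "u0' y + rho0 y \<le> Sup (range (\<lambda>x. u0' x + rho0 x))"
    by (auto intro: cSup_upper bounded_imp_bdd_above)
  moreover have "rho0 y \<le> Sup (range rho0)"
    using rho0_bdd by (auto intro: cSup_upper bounded_imp_bdd_above)
  ultimately show "rho0 y \<le> M" "u0' y + rho0 y \<le> M" by (auto simp: M_def)
qed

lemma M_nonneg: "0 \<le> M"
  using init_le_M(1)[of 0] rho0_nonneg[of 0] by linarith

text \<open>The bounds \<open>\<rho> \<le> M\<close> and \<open>e \<le> M\<close> must be propagated together: \<open>u\<^sub>x = e - \<rho>\<close> has the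
  right sign for each equation only where that unknown is the larger of the two.\<close>

lemma rho_e_le_M:
  assumes t: "t \<in> {0..<T}"
  shows "rho t x \<le> M \<and> e t x \<le> M"
proof -
  obtain V where V: "\<And>s y. 0 \<le> s \<Longrightarrow> s \<le> t \<Longrightarrow> \<bar>f (u s y)\<bar> \<le> V \<and> \<bar>u s y\<bar> \<le> V"
    using speeds_bounded[OF t] by blast
  have sT: "\<And>s. 0 < s \<Longrightarrow> s \<le> t \<Longrightarrow> s \<in> {0..<T}" using t by auto
  show ?thesis
  proof (rule transport_preserves_joint_upper_bound[OF rho_C1 e_C1, where a="\<lambda>s y. f (u s y)"
        and b=u and V=V])
    fix y show "rho 0 y \<le> M \<and> e 0 y \<le> M"
      using init_le_M[of y] t by (simp add: e_def rho_init ux_init)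
  next
    fix s y assume s: "0 < s" "s \<le> t" and "M < rho s y" "e s y \<le> rho s y"
    then have "rho s y * f' (u s y) * ux s y \<ge> 0"
      using rho_nonneg[OF sT[OF s]] f'_nonpos[of "u s y"]
      by (intro mult_nonpos_nonpos mult_nonneg_nonpos) (auto simp: e_def)
    then show "rhot s y + f (u s y) * rhox s y \<le> 0"
      using rhot_eq[OF sT[OF s], of y] by (simp add: algebra_simps)
  next
    fix s y assume s: "0 < s" "s \<le> t" and "M < e s y" "rho s y \<le> e s y"
    then have "ux s y * e s y \<ge> 0"
      using e_nonneg[OF sT[OF s]] by (auto simp: e_def)
    then show "et s y + u s y * ex s y \<le> 0"
      using et_eq[OF sT[OF s], of y] by simp
  qed (use t V in auto)
qed

definition f_C2_norm :: real where
  "f_C2_norm = Sup ((\<lambda>v. \<bar>f v\<bar> + \<bar>f' v\<bar> + \<bar>f'' v\<bar>) ` {u_min..u_max})"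

lemma f'_f''_le_C2_norm:
  assumes "u_min \<le> v" "v \<le> u_max"
  shows "\<bar>f' v\<bar> \<le> f_C2_norm" "\<bar>f'' v\<bar> \<le> f_C2_norm"
proof -
  have "continuous_on UNIV (\<lambda>v. \<bar>f v\<bar> + \<bar>f' v\<bar> + \<bar>f'' v\<bar>)"
    by (intro continuous_on_add continuous_on_rabs continuous_f continuous_f' continuous_f'')
  then have "compact ((\<lambda>v. \<bar>f v\<bar> + \<bar>f' v\<bar> + \<bar>f'' v\<bar>) ` {u_min..u_max})"
    by (rule compact_continuous_image[OF continuous_on_subset[OF _ subset_UNIV] compact_Icc])
  then have "bdd_above ((\<lambda>v. \<bar>f v\<bar> + \<bar>f' v\<bar> + \<bar>f'' v\<bar>) ` {u_min..u_max})"
    by (rule bounded_imp_bdd_above[OF compact_imp_bounded])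
  then have "\<bar>f v\<bar> + \<bar>f' v\<bar> + \<bar>f'' v\<bar> \<le> f_C2_norm"
    unfolding f_C2_norm_def using assms by (intro cSup_upper) auto
  then show "\<bar>f' v\<bar> \<le> f_C2_norm" "\<bar>f'' v\<bar> \<le> f_C2_norm" by auto
qed

lemma u_min_le_u_max: "u_min \<le> u_max"
  by (simp add: u_min_def u_max_def min.coboundedI2)

lemma C2_norm_nonneg: "0 \<le> f_C2_norm"
  using f'_f''_le_C2_norm(1)[OF order_refl u_min_le_u_max] abs_ge_zero
  by (rule order_trans[rotated])

definition G :: real where "G = (f_C2_norm + 1) * max (M ^ 3) 1"
definition E :: real where "E = 12 * (f_C2_norm + 1) * max (M ^ 3) 1"
definition Q :: real where "Q = 1 + supnorm rho0' + supnorm (\<lambda>x. u0'' x + rho0' x)"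

lemmas G_bounds = growth_constant_bounds[OF C2_norm_nonneg M_nonneg, folded G_def]

lemma E_eq: "E = 12 * G"
  by (simp add: E_def G_def)

lemma pointwise_bounds:
  assumes "s \<in> {0..<T}"
  shows "0 \<le> rho s y" "rho s y \<le> M" "0 \<le> e s y" "e s y \<le> M" "\<bar>ux s y\<bar> \<le> M"
    "\<bar>f' (u s y)\<bar> \<le> f_C2_norm" "\<bar>f'' (u s y)\<bar> \<le> f_C2_norm"
proof -
  show "0 \<le> rho s y" "rho s y \<le> M" "0 \<le> e s y" "e s y \<le> M"
    using rho_nonneg[OF assms] e_nonneg[OF assms] rho_e_le_M[OF assms] by auto
  then show "\<bar>ux s y\<bar> \<le> M" by (simp add: e_def)
  show "\<bar>f' (u s y)\<bar> \<le> f_C2_norm" "\<bar>f'' (u s y)\<bar> \<le> f_C2_norm"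
    using f'_f''_le_C2_norm u_range[OF assms] by blast+
qed

lemma rhox_growth_at_touch:
  assumes s: "s \<in> {0..<T}" and \<Phi>: "1 \<le> \<Phi>" and rhox: "\<bar>rhox s y\<bar> = \<Phi>" and ex: "\<bar>ex s y\<bar> \<le> \<Phi>"
  shows "rhox s y * (rhoxt s y + f (u s y) * rhoxx s y) < E * \<Phi>\<^sup>2"
proof -
  note b = pointwise_bounds[OF s, of y]
  define A where "A = rhox s y * f' (u s y) * ux s y"
  define B where "B = rho s y * f'' (u s y) * ux s y * ux s y"
  define C where "C = rho s y * f' (u s y) * (ex s y - rhox s y)"
  have rho: "\<bar>rho s y\<bar> \<le> M" using b by simp
  have "rhoxt s y + f (u s y) * rhoxx s y = - 2 * A - B - C"
    using rhoxt_eq[OF s, of y] by (simp add: A_def B_def C_def ex_def power2_eq_square algebra_simps)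
  moreover have "\<bar>A\<bar> \<le> G * \<Phi>"
  proof -
    have "\<bar>A\<bar> \<le> \<Phi> * (f_C2_norm * M)" unfolding A_def mult.assoc
      using b rhox by (intro abs_mult_le) auto
    also have "\<dots> \<le> G * \<Phi>" using mult_left_mono[OF G_bounds(3), of \<Phi>] \<Phi> by (simp add: mult.commute)
    finally show ?thesis .
  qed
  moreover have "\<bar>B\<bar> \<le> G * \<Phi>"
  proof -
    have "\<bar>B\<bar> \<le> M * f_C2_norm * M * M" unfolding B_def using b rho by (intro abs_mult_le) auto
    also have "\<dots> = f_C2_norm * M ^ 3" by (simp add: power3_eq_cube)
    also have "\<dots> \<le> G * 1" using G_bounds(4) by simp
    also have "\<dots> \<le> G * \<Phi>" using G_bounds(1) \<Phi> by (intro mult_left_mono) auto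
    finally show ?thesis .
  qed
  moreover have "\<bar>C\<bar> \<le> 2 * G * \<Phi>"
  proof -
    have "\<bar>C\<bar> \<le> (M * f_C2_norm) * (2 * \<Phi>)" unfolding C_def using b rho rhox ex by (intro abs_mult_le) auto
    also have "\<dots> \<le> G * (2 * \<Phi>)" using G_bounds(3) \<Phi> by (intro mult_right_mono) (auto simp: mult.commute)
    finally show ?thesis by simp
  qed
  ultimately have "\<bar>rhoxt s y + f (u s y) * rhoxx s y\<bar> \<le> 5 * G * \<Phi>" by linarith
  then show ?thesis
    using product_below_growth[of "rhox s y" \<Phi>] G_bounds rhox \<Phi> by (simp add: E_eq)
qed

lemma ex_growth_at_touch:
  assumes s: "s \<in> {0..<T}" and \<Phi>: "1 \<le> \<Phi>" and ex: "\<bar>ex s y\<bar> = \<Phi>" and rhox: "\<bar>rhox s y\<bar> \<le> \<Phi>"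
  shows "ex s y * (ext s y + u s y * exx s y) < E * \<Phi>\<^sup>2"
proof -
  note b = pointwise_bounds[OF s, of y]
  have et_x: "((\<lambda>y. et s y) has_real_derivative ext s x) (at x)" for x
    using s C1_strip_time_deriv[OF e_C1] C1_strip_space_deriv[OF e_C1]
      C1_strip_time_deriv[OF ex_C1] C1_strip_time_deriv_cont[OF ex_C1]
    by (intro partial_derivatives_commute[where g=e and ga=et and gb=ex and h=ext
          and A="{0..<T}" and B=UNIV])
       (auto simp: convex_real_interval at_within_Ico_nontrivial)
  have "(\<lambda>y. et s y) = (\<lambda>y. - ux s y * e s y - u s y * ex s y)" using et_eq[OF s] by auto
  with et_x have "((\<lambda>y. - ux s y * e s y - u s y * ex s y) has_real_derivative ext s y) (at y)"
    by simp
  moreover have "((\<lambda>y. - ux s y * e s y - u s y * ex s y) has_real_derivative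
      - uxx s y * e s y - ux s y * ex s y - ux s y * ex s y - u s y * exx s y) (at y)"
    using C1_strip_space_deriv[OF ux_C1 s] C1_strip_space_deriv[OF e_C1 s]
      C1_strip_space_deriv[OF u_C1 s] C1_strip_space_deriv[OF ex_C1 s]
    by (auto intro!: derivative_eq_intros)
  ultimately have "ext s y = - uxx s y * e s y - ux s y * ex s y - ux s y * ex s y - u s y * exx s y"
    by (rule DERIV_unique)
  then have "ext s y + u s y * exx s y = - (ex s y * e s y) + rhox s y * e s y - 2 * (ux s y * ex s y)"
    by (simp add: ex_def algebra_simps)
  moreover have "\<bar>ex s y * e s y\<bar> \<le> \<Phi> * M" "\<bar>rhox s y * e s y\<bar> \<le> \<Phi> * M"
    "\<bar>ux s y * ex s y\<bar> \<le> M * \<Phi>"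
    using b ex rhox by (auto intro!: abs_mult_le)
  moreover have "M * \<Phi> \<le> G * \<Phi>" using G_bounds \<Phi> by (intro mult_right_mono) auto
  moreover have "\<Phi> * M = M * \<Phi>" by (rule mult.commute)
  ultimately have "\<bar>ext s y + u s y * exx s y\<bar> \<le> 5 * G * \<Phi>"
    using G_bounds(1) \<Phi> by linarith
  then show ?thesis
    using product_below_growth[of "ex s y" \<Phi>] G_bounds ex \<Phi> by (simp add: E_eq)
qed

lemma initial_slopes_below_Q: "\<bar>rho0' y\<bar> < Q" "\<bar>u0'' y + rho0' y\<bar> < Q" "1 \<le> Q"
proof -
  have "\<bar>rho0' z\<bar> \<le> supnorm rho0'" "\<bar>u0'' z + rho0' z\<bar> \<le> supnorm (\<lambda>x. u0'' x + rho0' x)" for z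
    using abs_le_supnorm[OF rho0'_bdd] abs_le_supnorm[OF bounded_plus_comp[OF u0''_bdd rho0'_bdd]]
    by auto
  from this[of 0] this[of y]
  show "\<bar>rho0' y\<bar> < Q" "\<bar>u0'' y + rho0' y\<bar> < Q" "1 \<le> Q" by (auto simp: Q_def)
qed

lemma rhox_bound:
  assumes t: "t \<in> {0..<T}"
  shows "\<bar>rhox t x\<bar> < Q * exp (E * t)"
proof -
  obtain V where V: "\<And>s y. 0 \<le> s \<Longrightarrow> s \<le> t \<Longrightarrow> \<bar>f (u s y)\<bar> \<le> V \<and> \<bar>u s y\<bar> \<le> V"
    using speeds_bounded[OF t] by blast
  note Q = initial_slopes_below_Q(3)
  have \<Phi>: "1 \<le> Q * exp (E * s)" if "0 \<le> s" for s
  proof -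
    have "1 \<le> exp (E * s)" using G_bounds(1) that by (simp add: E_eq)
    then show ?thesis using Q mult_mono[of 1 Q 1 "exp (E * s)"] by simp
  qed
  have sT: "s \<in> {0..<T}" if "0 < s" "s \<le> t" for s using t that by auto
  have "\<bar>rhox t x\<bar> < Q * exp (E * t) \<and> \<bar>ex t x\<bar> < Q * exp (E * t)"
  proof (rule transport_joint_exponential_bound[OF rhox_C1 ex_C1, where a="\<lambda>s y. f (u s y)"
        and b=u and V=V])
    fix y show "\<bar>rhox 0 y\<bar> < Q \<and> \<bar>ex 0 y\<bar> < Q"
      using t initial_slopes_below_Q(1,2)[of y] by (simp add: ex_def rhox_init uxx_init)
  next
    fix s y assume s: "0 < s" "s \<le> t"
      and "\<bar>rhox s y\<bar> = Q * exp (E * s)" "\<bar>ex s y\<bar> \<le> Q * exp (E * s)"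
    then show "rhox s y * (rhoxt s y + f (u s y) * rhoxx s y) < E * (Q * exp (E * s))\<^sup>2"
      using rhox_growth_at_touch[OF sT[OF s] \<Phi>[of s]] by simp
  next
    fix s y assume s: "0 < s" "s \<le> t"
      and "\<bar>ex s y\<bar> = Q * exp (E * s)" "\<bar>rhox s y\<bar> \<le> Q * exp (E * s)"
    then show "ex s y * (ext s y + u s y * exx s y) < E * (Q * exp (E * s))\<^sup>2"
      using ex_growth_at_touch[OF sT[OF s] \<Phi>[of s]] by simp
  qed (use t V Q in auto)
  then show ?thesis by simp
qed

lemma supnorm_rhox_le: "t \<in> {0..<T} \<Longrightarrow> supnorm (rhox t) \<le> Q * exp (E * t)"
  using rhox_bound by (intro supnorm_le less_imp_le)

end

theorem mainTheorem10:
  fixes f :: "real \<Rightarrow> real" and ustar :: real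
    and rho0 rho0' u0 u0' u0'' :: "real \<Rightarrow> real"
    and T :: real
    and rho rhot rhox u ut ux uxx rhoxt rhoxx ext exx :: "real \<Rightarrow> real \<Rightarrow> real"
  assumes f_smooth: "smooth_real f"
    and f_dec: "\<And>v. deriv f v \<le> 0"
    and ustar: "f ustar = ustar"
    and rho0_der: "\<And>x. (rho0 has_real_derivative rho0' x) (at x)"
    and rho0'_cont: "continuous_on UNIV rho0'"
    and rho0_bdd: "bounded (range rho0)" and rho0'_bdd: "bounded (range rho0')"
    and u0_der: "\<And>x. (u0 has_real_derivative u0' x) (at x)"
    and u0'_der: "\<And>x. (u0' has_real_derivative u0'' x) (at x)"
    and u0''_cont: "continuous_on UNIV u0''"
    and u0_bdd: "bounded (range u0)" and u0'_bdd: "bounded (range u0')"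
    and u0''_bdd: "bounded (range u0'')"
    and rho0_nonneg: "\<And>x. rho0 x \<ge> 0"
    and e0_nonneg: "\<And>x. u0' x + rho0 x \<ge> 0"
    and rho_C1: "C1_strip T rho rhot rhox"
    and u_C1: "C1_strip T u ut ux"
    and bdd: "bdd_strip T rho" "bdd_strip T u" "bdd_strip T rhox" "bdd_strip T ux"
    and eq_rho: "\<And>t x. t \<in> {0..<T} \<Longrightarrow>
        ((\<lambda>y. rho t y * f (u t y)) has_real_derivative (- rhot t x)) (at x)"
    and eq_u: "\<And>t x. t \<in> {0..<T} \<Longrightarrow>
        ut t x + u t x * ux t x = rho t x * (f (u t x) - u t x)"
    and init: "\<And>x. rho 0 x = rho0 x" "\<And>x. u 0 x = u0 x"
    and ux_der: "\<And>t x. t \<in> {0..<T} \<Longrightarrow> ((\<lambda>y. ux t y) has_real_derivative uxx t x) (at x)"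
    and rhox_C1: "C1_strip T rhox rhoxt rhoxx"
    and ex_C1: "C1_strip T (\<lambda>t x. uxx t x + rhox t x) ext exx"
  shows "\<forall>t\<in>{0..<T}.
    supnorm (rhox t) \<le>
      (1 + supnorm rho0' + supnorm (\<lambda>x. u0'' x + rho0' x)) *
      exp (12 * (Sup ((\<lambda>v. \<bar>f v\<bar> + \<bar>deriv f v\<bar> + \<bar>deriv (deriv f) v\<bar>) `
                     {min (Inf (range u0)) ustar .. max (Sup (range u0)) ustar}) + 1)
              * max ((max (Sup (range rho0)) (Sup (range (\<lambda>x. u0' x + rho0 x)))) ^ 3) 1 * t)"
proof -
  interpret classical_solution f ustar rho0 rho0' u0 u0' u0'' T
      rho rhot rhox u ut ux uxx rhoxt rhoxx ext exx
    by unfold_locales (fact assms)+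
  show ?thesis
    using supnorm_rhox_le
    unfolding Q_def E_def f_C2_norm_def f'_def f''_def M_def u_min_def u_max_def by blast
qed

end
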